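(* Let $c\in(0,\sqrt2)$, $d_2>0$, and for $n_2\in\mathbb{N}_0$ let $\tilde n_2=\frac{n_2}{2d_2}$ and $l_{n_2}(\xi_1)=(2\pi)^4(\xi_1^2+\tilde n_2^2)^2-c^2(2\pi\xi_1)^2+1$. Then $$\min_{\xi_1\in\mathbb{R}}l_{n_2}(\xi_1)=\begin{cases}c^2(2\pi\tilde n_2)^2+1-\frac{c^4}{4}&\text{if }0\le n_2\le\frac{d_2c}{\pi\sqrt2},\\(2\pi\tilde n_2)^4+1&\text{otherwise.}\end{cases}$$ Furthermore, if $n_2\ge\frac{d_2c}{\pi}$, then $l_{n_2}(\xi_1)\ge\frac{(2\pi)^4}{2}(\tilde n_2^2+\xi_1^2)^2$ for all $\xi_1\in\mathbb{R}$. In particular, for every $N\in\mathbb{N}$ with $N>\frac{d_2c}{\pi}$, $$\sum_{n_2=N+1}^{\infty}\left\|\frac{1}{l_{n_2}}\right\|_{L^2(\mathbb{R})}^2\le\frac{5(2d_2)^7}{48(2\pi)^7N^6}.$$ *)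

theory Defs
  imports "HOL-Analysis.Analysis"
begin

definition ntilde :: "real \<Rightarrow> nat \<Rightarrow> real" where
  "ntilde d2 n2 = real n2 / (2 * d2)"

definition lfun :: "real \<Rightarrow> real \<Rightarrow> nat \<Rightarrow> real \<Rightarrow> real" where
  "lfun c d2 n2 \<xi> = (2*pi)^4 * (\<xi>^2 + (ntilde d2 n2)^2)^2 - c^2 * (2*pi*\<xi>)^2 + 1"

end

theory Submission
  imports Defs "HOL-Probability.Sinc_Integral"
begin

(* Put s = (2 pi xi)^2 and V = (2 pi ntilde)^2, so that l = (s + V)^2 - c^2 s + 1 is a quadratic
   in s >= 0 with vertex at s = c^2/2 - V: the minimum sits at the vertex if V <= c^2/2 and at
   s = 0 otherwise. If V >= c^2, i.e. n2 >= d2 c / pi, then c^2 s <= V s gives the bound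
   l >= 3/4 (s + V)^2 + 1. Together with (a^2 + xi^2)^4 >= 4 a^6 ((a/2)^2 + xi^2) it dominates
   1/l^2 by a Cauchy kernel of explicit integral, so each term is O(n2^-7); the factor 3/4
   (rather than 1/2) leaves room for this crude kernel bound to still give the constant 5/48.
   The tail sum is bounded by telescoping 1/(m+1)^7 <= (m^-6 - (m+1)^-6)/6. *)

lemma two_pi_ntilde: "2 * pi * ntilde d2 n = pi * real n / d2"
  by (simp add: ntilde_def)

lemma lfun_eq_quadratic:
  "lfun c d2 n \<xi> = ((2*pi*\<xi>)^2 + (2*pi*ntilde d2 n)^2)^2 - c^2 * (2*pi*\<xi>)^2 + 1"
  by (simp add: lfun_def power_mult_distrib algebra_simps power2_eq_square power4_eq_xxxx)

lemma le_threshold_iff_two_pi_ntilde_square_le: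
  assumes "0 < c" "0 < d2"
  shows "real n \<le> d2 * c / (pi * sqrt 2) \<longleftrightarrow> (2*pi*ntilde d2 n)^2 \<le> c^2 / 2"
proof -
  have "real n \<le> d2 * c / (pi * sqrt 2) \<longleftrightarrow> 2*pi*ntilde d2 n \<le> c / sqrt 2"
    unfolding two_pi_ntilde using assms by (simp add: field_simps)
  also have "\<dots> \<longleftrightarrow> (2*pi*ntilde d2 n)^2 \<le> (c / sqrt 2)^2"
    using assms by (subst power2_le_iff_abs_le) (simp_all add: two_pi_ntilde)
  finally show ?thesis by (simp add: power_divide)
qed

lemma ge_threshold_iff_two_pi_ntilde_square_ge:
  assumes "0 < c" "0 < d2"
  shows "d2 * c / pi \<le> real n \<longleftrightarrow> c^2 \<le> (2*pi*ntilde d2 n)^2"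
proof -
  have "d2 * c / pi \<le> real n \<longleftrightarrow> c \<le> 2*pi*ntilde d2 n"
    unfolding two_pi_ntilde using assms by (simp add: field_simps)
  also have "\<dots> \<longleftrightarrow> c^2 \<le> (2*pi*ntilde d2 n)^2"
    using assms by (subst power2_le_iff_abs_le) (simp_all add: two_pi_ntilde)
  finally show ?thesis .
qed

lemma quadratic_eq_vertex_form:
  fixes s V c :: real
  shows "(s + V)^2 - c^2 * s + 1 = (s + V - c^2/2)^2 + (c^2 * V + 1 - c^4/4)"
  by (simp add: power2_eq_square power4_eq_xxxx algebra_simps)

lemma quadratic_ge_at_zero:
  fixes s V c :: real
  assumes "0 \<le> s" "c^2/2 \<le> V"
  shows "V^2 + 1 \<le> (s + V)^2 - c^2 * s + 1"
proof -
  have "(s + V)^2 - c^2 * s + 1 - (V^2 + 1) = s * (s + 2*V - c^2)"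
    by (simp add: power2_eq_square algebra_simps)
  moreover have "0 \<le> s * (s + 2*V - c^2)" using assms by simp
  ultimately show ?thesis by simp
qed

lemma quadratic_ge_three_quarters:
  fixes s V c :: real
  assumes "0 \<le> s" "c^2 \<le> V"
  shows "3/4 * (s + V)^2 + 1 \<le> (s + V)^2 - c^2 * s + 1"
proof -
  have "c^2 * s \<le> V * s" using assms by (simp add: mult_right_mono)
  moreover have "(s + V)^2 / 4 - V * s = (s - V)^2 / 4" by (simp add: power2_eq_square algebra_simps)
  moreover have "0 \<le> (s - V)^2 / 4" by simp
  ultimately show ?thesis by linarith
qed

lemma lfun_minimum:
  assumes "0 < c" "0 < d2"
  shows "let m = (if real n \<le> d2 * c / (pi * sqrt 2)
                  then c^2 * (2*pi*ntilde d2 n)^2 + 1 - c^4 / 4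
                  else (2*pi*ntilde d2 n)^4 + 1)
         in (\<exists>\<xi>. lfun c d2 n \<xi> = m) \<and> (\<forall>\<xi>. m \<le> lfun c d2 n \<xi>)"
proof -
  define V where "V = (2*pi*ntilde d2 n)^2"
  have l: "lfun c d2 n \<xi> = ((2*pi*\<xi>)^2 + V)^2 - c^2 * (2*pi*\<xi>)^2 + 1" for \<xi>
    by (simp add: lfun_eq_quadratic V_def)
  have threshold: "real n \<le> d2 * c / (pi * sqrt 2) \<longleftrightarrow> V \<le> c^2 / 2"
    unfolding V_def using assms by (rule le_threshold_iff_two_pi_ntilde_square_le)
  show ?thesis
  proof (cases "V \<le> c^2 / 2")
    case True
    define \<xi>\<^sub>0 where "\<xi>\<^sub>0 = sqrt (c^2/2 - V) / (2*pi)"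
    have "(2*pi*\<xi>\<^sub>0)^2 = c^2/2 - V" using True by (simp add: \<xi>\<^sub>0_def)
    then have "lfun c d2 n \<xi>\<^sub>0 = c^2 * V + 1 - c^4/4"
      by (simp only: l quadratic_eq_vertex_form) simp
    moreover have "c^2 * V + 1 - c^4/4 \<le> lfun c d2 n \<xi>" for \<xi>
      by (simp add: l quadratic_eq_vertex_form)
    ultimately show ?thesis using True threshold by (auto simp: Let_def V_def)
  next
    case False
    have "lfun c d2 n 0 = V^2 + 1" by (simp add: l)
    moreover have "V^2 + 1 \<le> lfun c d2 n \<xi>" for \<xi>
      using quadratic_ge_at_zero[of "(2*pi*\<xi>)^2" c V] False by (simp add: l)
    ultimately show ?thesis using False threshold
      by (auto simp: Let_def V_def simp flip: power_mult)
  qed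
qed

lemma lfun_ge_three_quarters:
  assumes "c^2 \<le> (2*pi*ntilde d2 n)^2"
  shows "3/4 * (2*pi)^4 * ((ntilde d2 n)^2 + \<xi>^2)^2 + 1 \<le> lfun c d2 n \<xi>"
proof -
  have "((2*pi*\<xi>)^2 + (2*pi*ntilde d2 n)^2)^2 = (2*pi)^4 * ((ntilde d2 n)^2 + \<xi>^2)^2"
    by (simp add: power_mult_distrib power2_eq_square power4_eq_xxxx algebra_simps)
  then show ?thesis
    using quadratic_ge_three_quarters[of "(2*pi*\<xi>)^2" c "(2*pi*ntilde d2 n)^2"] assms
    by (simp add: lfun_eq_quadratic)
qed

lemma lfun_ge_half:
  assumes "0 < c" "0 < d2" "d2 * c / pi \<le> real n"
  shows "(2*pi)^4 / 2 * ((ntilde d2 n)^2 + \<xi>^2)^2 \<le> lfun c d2 n \<xi>"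
proof -
  have "c^2 \<le> (2*pi*ntilde d2 n)^2"
    using assms by (simp add: ge_threshold_iff_two_pi_ntilde_square_ge)
  moreover have "0 \<le> (2*pi)^4 * ((ntilde d2 n)^2 + \<xi>^2)^2" by simp
  ultimately show ?thesis using lfun_ge_three_quarters[of c d2 n \<xi>] by linarith
qed

lemma nn_integral_inverse_1_plus_square:
  "(\<integral>\<^sup>+x. ennreal (inverse (1 + x^2)) \<partial>lborel) = ennreal pi"
proof -
  have "integrable lborel (\<lambda>x::real. inverse (1 + x^2))"
    using integrable_inverse_1_plus_square by (simp add: set_integrable_def einterval_def)
  moreover have "integral\<^sup>L lborel (\<lambda>x::real. inverse (1 + x^2)) = pi"
    using LBINT_inverse_1_plus_square
    by (simp add: interval_lebesgue_integral_def set_lebesgue_integral_def einterval_def)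
  ultimately show ?thesis
    by (subst nn_integral_eq_integral) (auto simp: add_pos_nonneg)
qed

lemma nn_integral_inverse_square_plus_square:
  fixes b :: real
  assumes "0 < b"
  shows "(\<integral>\<^sup>+x. ennreal (inverse (b^2 + x^2)) \<partial>lborel) = ennreal (pi / b)"
proof -
  have "(\<integral>\<^sup>+x. ennreal (inverse (b^2 + x^2)) \<partial>lborel)
      = \<bar>b\<bar> * (\<integral>\<^sup>+x. ennreal (inverse (b^2 + (0 + b*x)^2)) \<partial>lborel)"
    by (rule nn_integral_real_affine) (use assms in auto)
  also have "(\<lambda>x. ennreal (inverse (b^2 + (0 + b*x)^2)))
           = (\<lambda>x. ennreal (inverse (b^2)) * ennreal (inverse (1 + x^2)))"
    using assms by (auto simp: ennreal_mult[symmetric] power_mult_distrib field_simps add_pos_nonneg)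
  also have "(\<integral>\<^sup>+x. ennreal (inverse (b^2)) * ennreal (inverse (1 + x^2)) \<partial>lborel)
           = ennreal (inverse (b^2)) * ennreal pi"
    by (subst nn_integral_cmult) (auto simp: nn_integral_inverse_1_plus_square)
  finally show ?thesis
    using assms by (simp add: ennreal_mult[symmetric] power2_eq_square field_simps)
qed

lemma power4_sum_squares_ge:
  fixes a x :: real
  shows "4 * a^6 * ((a/2)^2 + x^2) \<le> (a^2 + x^2)^4"
proof -
  have "(a^2 + x^2)^4 - 4 * a^6 * ((a/2)^2 + x^2) = 6*(a^2)^2*(x^2)^2 + 4*a^2*(x^2)^3 + (x^2)^4"
    by (simp add: power2_eq_square power4_eq_xxxx algebra_simps eval_nat_numeral)
  moreover have "0 \<le> 6*(a^2)^2*(x^2)^2 + 4*a^2*(x^2)^3 + (x^2)^4" by simp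
  ultimately show ?thesis by linarith
qed

lemma inverse_lfun_square_le_Cauchy_kernel:
  assumes "c^2 \<le> (2*pi*ntilde d2 n)^2" "0 < ntilde d2 n"
  shows "(1 / lfun c d2 n \<xi>)^2
           \<le> 4 / (9 * (2*pi)^8 * (ntilde d2 n)^6) * inverse ((ntilde d2 n / 2)^2 + \<xi>^2)"
proof -
  define a where "a = ntilde d2 n"
  define P where "P = (2*pi)^4 * (a^2 + \<xi>^2)^2"
  have a: "0 < a" using assms by (simp add: a_def)
  have P: "0 < P" using a by (simp add: P_def add_pos_nonneg)
  have P_square: "P^2 = (2*pi)^8 * (a^2 + \<xi>^2)^4"
    by (simp add: P_def power_mult_distrib flip: power_mult)
  have l: "3/4 * P < lfun c d2 n \<xi>"
    using lfun_ge_three_quarters[OF assms(1), of \<xi>] by (simp add: P_def a_def)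
  have "(1 / lfun c d2 n \<xi>)^2 \<le> (1 / (3/4 * P))^2"
    using l P by (intro power_mono divide_left_mono) auto
  also have "\<dots> = 16/9 / ((2*pi)^8 * (a^2 + \<xi>^2)^4)"
    unfolding P_square[symmetric] using P by (simp add: field_simps power2_eq_square)
  also have "\<dots> \<le> 16/9 / ((2*pi)^8 * (4 * a^6 * ((a/2)^2 + \<xi>^2)))"
    using a power4_sum_squares_ge[of a \<xi>]
    by (intro divide_left_mono mult_left_mono mult_pos_pos) (auto simp: add_pos_nonneg)
  also have "\<dots> = 4 / (9 * (2*pi)^8 * a^6) * inverse ((a/2)^2 + \<xi>^2)"
  proof -
    have scale: "16/9 / ((2*pi)^8 * (4 * a^6 * B)) = 4 / (9 * (2*pi)^8 * a^6) * inverse B"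
      if "0 < B" for B
      using a that by (simp add: field_simps)
    show ?thesis
      by (rule scale) (use a in \<open>simp add: add_pos_nonneg\<close>)
  qed
  finally show ?thesis by (simp add: a_def)
qed

lemma nn_integral_inverse_lfun_square_le:
  assumes "0 < c" "0 < d2" "d2 * c / pi \<le> real n"
  shows "(\<integral>\<^sup>+\<xi>. ennreal ((1 / lfun c d2 n \<xi>)^2) \<partial>lborel)
           \<le> ennreal (4 * (2*d2)^7 / (9 * (2*pi)^7 * real n ^ 7))"
proof -
  define a where "a = ntilde d2 n"
  define K where "K = 4 / (9 * (2*pi)^8 * a^6)"
  have "0 < d2 * c / pi" using assms by simp
  then have "0 < real n" using assms by linarith
  then have a: "0 < a" using assms by (simp add: a_def ntilde_def)
  have c: "c^2 \<le> (2*pi*ntilde d2 n)^2"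
    using assms by (simp add: ge_threshold_iff_two_pi_ntilde_square_ge)
  have "(\<integral>\<^sup>+\<xi>. ennreal ((1 / lfun c d2 n \<xi>)^2) \<partial>lborel)
      \<le> (\<integral>\<^sup>+\<xi>. ennreal K * ennreal (inverse ((a/2)^2 + \<xi>^2)) \<partial>lborel)"
  proof (rule nn_integral_mono)
    fix \<xi> :: real
    have "(1 / lfun c d2 n \<xi>)^2 \<le> K * inverse ((a/2)^2 + \<xi>^2)"
      using inverse_lfun_square_le_Cauchy_kernel[OF c] a by (simp add: K_def a_def)
    then show "ennreal ((1 / lfun c d2 n \<xi>)^2) \<le> ennreal K * ennreal (inverse ((a/2)^2 + \<xi>^2))"
      by (simp add: K_def ennreal_mult[symmetric] add_pos_nonneg ennreal_leI)
  qed
  also have "\<dots> = ennreal K * ennreal (pi / (a/2))"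
    using a by (subst nn_integral_cmult) (auto simp: nn_integral_inverse_square_plus_square)
  also have "\<dots> = ennreal (K * (pi / (a/2)))"
    by (rule ennreal_mult[symmetric]) (use a in \<open>simp_all add: K_def\<close>)
  also have "K * (pi / (a/2)) = 4 * (2*d2)^7 / (9 * (2*pi)^7 * real n ^ 7)"
    using assms a by (simp add: K_def a_def ntilde_def field_simps power_mult_distrib eval_nat_numeral)
  finally show ?thesis .
qed

lemma linear_times_power_le_power_Suc:
  fixes m :: real
  assumes "0 \<le> m"
  shows "(m + 1 + k) * m ^ k \<le> (m + 1) ^ Suc k"
proof (induction k)
  case 0
  show ?case by simp
next
  case (Suc k)
  have "(m + 1 + Suc k) * m ^ Suc k \<le> (m + 1) * ((m + 1 + k) * m ^ k)"
    using assms by (simp add: algebra_simps)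
  also have "\<dots> \<le> (m + 1) ^ Suc (Suc k)"
    using Suc.IH assms by (simp add: mult_left_mono)
  finally show ?case .
qed

lemma inverse_power_Suc_le_telescope:
  fixes m :: real
  assumes "0 < m" "0 < k"
  shows "1 / (m + 1) ^ Suc k \<le> (1 / m ^ k - 1 / (m + 1) ^ k) / k"
proof -
  define x y where "x = m ^ k" and "y = (m + 1) ^ k"
  have pos: "0 < x" "0 < y" using assms by (simp_all add: x_def y_def)
  have "1 / (m + 1) ^ Suc k = k * x / ((m + 1) * (k * x * y))"
    using pos assms by (simp add: y_def)
  also have "\<dots> \<le> (m + 1) * (y - x) / ((m + 1) * (k * x * y))"
    using linear_times_power_le_power_Suc[of m k] pos assms
    by (intro divide_right_mono) (simp_all add: x_def y_def algebra_simps)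
  also have "\<dots> = (y - x) / (k * x * y)"
    using assms by simp
  also have "\<dots> = (1 / x - 1 / y) / k"
    using pos by (simp add: field_simps)
  finally show ?thesis by (simp add: x_def y_def)
qed

lemma sum_inverse_power_Suc_tail_le:
  fixes N k M :: nat
  assumes "0 < N" "0 < k"
  shows "(\<Sum>i<M. 1 / real (i + N + 1) ^ Suc k) \<le> 1 / (k * real N ^ k)"
proof -
  have "(\<Sum>i<M. 1 / real (i + N + 1) ^ Suc k) \<le> (1 / real N ^ k - 1 / real (M + N) ^ k) / k"
  proof (induction M)
    case 0
    show ?case by simp
  next
    case (Suc M)
    have "1 / real (M + N + 1) ^ Suc k \<le> (1 / real (M + N) ^ k - 1 / real (M + N + 1) ^ k) / k"
      using inverse_power_Suc_le_telescope[of "real (M + N)" k] assms by (simp add: ac_simps)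
    with Suc.IH show ?case by (simp add: diff_divide_distrib)
  qed
  also have "\<dots> \<le> (1 / real N ^ k) / k"
    by (intro divide_right_mono) simp_all
  finally show ?thesis by (simp add: mult.commute)
qed

lemma suminf_ennreal_inverse_power_Suc_tail_le:
  fixes N k :: nat and B :: real
  assumes "0 \<le> B" "0 < N" "0 < k"
  shows "(\<Sum>i. ennreal (B / real (i + N + 1) ^ Suc k)) \<le> ennreal (B / (k * real N ^ k))"
proof (rule suminf_le_const[OF summableI])
  fix M
  have "(\<Sum>i<M. ennreal (B / real (i + N + 1) ^ Suc k))
      = ennreal (B * (\<Sum>i<M. 1 / real (i + N + 1) ^ Suc k))"
    using assms by (subst sum_ennreal) (auto simp: sum_distrib_left)
  also have "\<dots> \<le> ennreal (B / (k * real N ^ k))"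
    using mult_left_mono[OF sum_inverse_power_Suc_tail_le[OF assms(2,3)] assms(1)]
    by (intro ennreal_leI) simp
  finally show "(\<Sum>i<M. ennreal (B / real (i + N + 1) ^ Suc k)) \<le> ennreal (B / (k * real N ^ k))" .
qed

lemma suminf_nn_integral_inverse_lfun_square_le:
  assumes "0 < c" "0 < d2" "d2 * c / pi < real N"
  shows "(\<Sum>k. \<integral>\<^sup>+ \<xi>. ennreal ((1 / lfun c d2 (k + N + 1) \<xi>)^2) \<partial>lborel)
           \<le> ennreal (5 * (2*d2)^7 / (48 * (2*pi)^7 * real N ^ 6))"
proof -
  define B where "B = 4 * (2*d2)^7 / (9 * (2*pi)^7)"
  have B: "0 \<le> B" using assms by (simp add: B_def)
  have "0 < d2 * c / pi" using assms by simp
  then have N: "0 < N" using assms by linarith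
  have "(\<Sum>k. \<integral>\<^sup>+ \<xi>. ennreal ((1 / lfun c d2 (k + N + 1) \<xi>)^2) \<partial>lborel)
      \<le> (\<Sum>k. ennreal (B / real (k + N + 1) ^ Suc 6))"
  proof (intro suminf_le summableI)
    fix k
    have "d2 * c / pi \<le> real (k + N + 1)" using assms by simp
    from nn_integral_inverse_lfun_square_le[OF assms(1,2) this]
    show "(\<integral>\<^sup>+ \<xi>. ennreal ((1 / lfun c d2 (k + N + 1) \<xi>)^2) \<partial>lborel)
            \<le> ennreal (B / real (k + N + 1) ^ Suc 6)"
      by (simp add: B_def mult.assoc)
  qed
  also have "\<dots> \<le> ennreal (B / (6 * real N ^ 6))"
    using suminf_ennreal_inverse_power_Suc_tail_le[OF B N, of 6] by simp
  also have "\<dots> \<le> ennreal (5 * (2*d2)^7 / (48 * (2*pi)^7 * real N ^ 6))"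
    using assms N by (intro ennreal_leI) (simp add: B_def field_simps)
  finally show ?thesis .
qed

theorem lemma7p1:
  fixes c d2 :: real
  assumes "0 < c" and "c < sqrt 2" and "0 < d2"
  shows "(\<forall>n2::nat.
           (let m = (if real n2 \<le> d2 * c / (pi * sqrt 2)
                     then c^2 * (2*pi*ntilde d2 n2)^2 + 1 - c^4 / 4
                     else (2*pi*ntilde d2 n2)^4 + 1)
            in (\<exists>\<xi>. lfun c d2 n2 \<xi> = m) \<and> (\<forall>\<xi>. m \<le> lfun c d2 n2 \<xi>))) \<and>
         (\<forall>n2::nat. real n2 \<ge> d2 * c / pi \<longrightarrow>
           (\<forall>\<xi>::real. lfun c d2 n2 \<xi> \<ge> (2*pi)^4 / 2 * ((ntilde d2 n2)^2 + \<xi>^2)^2)) \<and>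
         (\<forall>N::nat. real N > d2 * c / pi \<longrightarrow>
           (\<Sum>k. \<integral>\<^sup>+ \<xi>. ennreal ((1 / lfun c d2 (k + N + 1) \<xi>)^2) \<partial>lborel)
             \<le> ennreal (5 * (2*d2)^7 / (48 * (2*pi)^7 * real N ^ 6)))"
  using lfun_minimum[OF assms(1,3)] lfun_ge_half[OF assms(1,3)]
    suminf_nn_integral_inverse_lfun_square_le[OF assms(1,3)]
  by blast

end
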